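(* Let $C_{-1},C_0,C_1$ be nonnegative $m\times m$ matrices, where $m$ may be countably infinite, and let $C_*(\theta)=e^{-\theta}C_{-1}+C_0+e^{\theta}C_1$ for $\theta\in\mathbb{R}$. Assume that $C_*(0)^n$ is finite for every $n\in\mathbb{Z}_+$ and that $C_*(0)$ is irreducible. For a positive integer $k$, let $C^{[k]}(\theta)$ be the $k\times k$ block matrix (blocks of size $m\times m$, block indices $1,\dots,k$) whose $(i,i')$ block is the sum of: $C_0$ if $i'=i$; $C_1$ if $i'=i+1$; $C_{-1}$ if $i'=i-1$; $e^{-\theta}C_{-1}$ if $(i,i')=(1,k)$; $e^{\theta}C_1$ if $(i,i')=(k,1)$ (and $O$ if none applies). Then $\mathrm{cp}(C_*(\theta))=\mathrm{cp}(C^{[k]}(k\theta))$ for every $\theta\in\mathbb{R}$.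
   Context: For a nonnegative square matrix $A$ of finite or countable dimension, the convergence parameter is $\mathrm{cp}(A)=\sup\{r\ge0:\sum_{n\ge0}r^nA^n<\infty\text{ elementwise}\}$. Thus $C^{[k]}(\theta)$ is block tridiagonal with $C_{-1},C_0,C_1$ on the sub-, main and super-diagonals, plus corner blocks $e^{-\theta}C_{-1}$ in position $(1,k)$ and $e^{\theta}C_1$ in position $(k,1)$; contributions landing in the same block position (when $k\le2$) are added. *)

theory Defs
  imports "HOL-Analysis.Analysis"
begin

text \<open>Nonnegative matrices indexed by a (finite or countable) index set S, with entries
  in ennreal so that products of infinite matrices (possibly divergent sums) are well defined.\<close>

definition nnmat_mult :: "'i set \<Rightarrow> ('i \<Rightarrow> 'i \<Rightarrow> ennreal) \<Rightarrow> ('i \<Rightarrow> 'i \<Rightarrow> ennreal) \<Rightarrow> 'i \<Rightarrow> 'i \<Rightarrow> ennreal" where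
  "nnmat_mult S A B = (\<lambda>i j. \<Sum>\<^sub>\<infinity>l\<in>S. A i l * B l j)"

fun nnmat_pow :: "'i set \<Rightarrow> ('i \<Rightarrow> 'i \<Rightarrow> ennreal) \<Rightarrow> nat \<Rightarrow> 'i \<Rightarrow> 'i \<Rightarrow> ennreal" where
  "nnmat_pow S A 0 = (\<lambda>i j. if i = j then 1 else 0)"
| "nnmat_pow S A (Suc n) = nnmat_mult S (nnmat_pow S A n) A"

definition to_nn :: "('i \<Rightarrow> 'i \<Rightarrow> real) \<Rightarrow> 'i \<Rightarrow> 'i \<Rightarrow> ennreal" where
  "to_nn A = (\<lambda>i j. ennreal (A i j))"

definition conv_param :: "'i set \<Rightarrow> ('i \<Rightarrow> 'i \<Rightarrow> real) \<Rightarrow> ennreal" where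
  "conv_param S A = Sup {ennreal r | r. r \<ge> 0 \<and>
      (\<forall>i\<in>S. \<forall>j\<in>S. (\<Sum>n. ennreal r ^ n * nnmat_pow S (to_nn A) n i j) < top)}"

definition Cstar :: "('i \<Rightarrow> 'i \<Rightarrow> real) \<Rightarrow> ('i \<Rightarrow> 'i \<Rightarrow> real) \<Rightarrow> ('i \<Rightarrow> 'i \<Rightarrow> real) \<Rightarrow> real \<Rightarrow> 'i \<Rightarrow> 'i \<Rightarrow> real" where
  "Cstar Cm1 C0 C1 \<theta> = (\<lambda>i j. exp (-\<theta>) * Cm1 i j + C0 i j + exp \<theta> * C1 i j)"

text \<open>The k \<times> k block matrix C^[k](\<theta>); index (i,a) means row i within block a,
  block indices range over {1..k}; contributions to the same block are added.\<close>
definition Cblock :: "('i \<Rightarrow> 'i \<Rightarrow> real) \<Rightarrow> ('i \<Rightarrow> 'i \<Rightarrow> real) \<Rightarrow> ('i \<Rightarrow> 'i \<Rightarrow> real) \<Rightarrow> nat \<Rightarrow> real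
     \<Rightarrow> ('i \<times> nat) \<Rightarrow> ('i \<times> nat) \<Rightarrow> real" where
  "Cblock Cm1 C0 C1 k \<theta> = (\<lambda>(i, a) (j, b).
      (if b = a then C0 i j else 0)
    + (if b = a + 1 then C1 i j else 0)
    + (if a = b + 1 then Cm1 i j else 0)
    + (if a = 1 \<and> b = k then exp (-\<theta>) * Cm1 i j else 0)
    + (if a = k \<and> b = 1 then exp \<theta> * C1 i j else 0))"

end

theory Submission
  imports Defs
begin

(* Weight block b by exp (b * theta), i.e. conjugate C^[k](k * theta) by the block diagonal
   matrix diag (exp (b * theta)).  Every block row of the conjugated matrix then sums to
   C_*(theta): the blocks C_1 and C_(-1) beside the diagonal acquire the factors exp theta and
   exp (-theta), and the corner blocks exp (k * theta) C_1 and exp (-k * theta) C_(-1) acquire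
   exp ((1 - k) * theta) and exp ((k - 1) * theta), which leaves the same factors.  This
   lumping identity passes to all powers and hence to the power series sum_n r^n A^n.  As the
   weights are finitely many positive reals, one series is finite exactly when the other is,
   so both matrices admit the same r and have the same convergence parameter. *)

lemma infsum_cmult_right_ennreal:
  fixes f :: "'a \<Rightarrow> ennreal"
  shows "infsum (\<lambda>x. c * f x) A = c * infsum f A"
proof -
  have "infsum (\<lambda>x. c * f x) A = (SUP F\<in>{F. finite F \<and> F \<subseteq> A}. c * sum f F)"
    by (simp add: nonneg_infsum_complete sum_distrib_left)
  also have "\<dots> = c * (SUP F\<in>{F. finite F \<and> F \<subseteq> A}. sum f F)"
    by (simp add: SUP_mult_left_ennreal)
  finally show ?thesis
    by (simp add: nonneg_infsum_complete)
qed

lemma infsum_sum_ennreal: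
  fixes g :: "'b \<Rightarrow> 'a \<Rightarrow> ennreal"
  assumes "finite B"
  shows "infsum (\<lambda>x. \<Sum>b\<in>B. g b x) A = (\<Sum>b\<in>B. infsum (g b) A)"
  using assms
  by (induction B rule: finite_induct) (simp_all add: infsum_add nonneg_summable_on_complete)

lemma infsum_Times_finite_ennreal:
  fixes f :: "'a \<times> 'b \<Rightarrow> ennreal"
  assumes "finite B"
  shows "infsum f (A \<times> B) = (\<Sum>y\<in>B. infsum (\<lambda>x. f (x, y)) A)"
  using assms
proof (induction B rule: finite_induct)
  case (insert y B)
  have "A \<times> insert y B = (\<lambda>x. (x, y)) ` A \<union> A \<times> B"
    by auto
  moreover have "infsum f ((\<lambda>x. (x, y)) ` A) = infsum (\<lambda>x. f (x, y)) A"
    by (simp add: infsum_reindex inj_on_def o_def)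
  moreover have "infsum f ((\<lambda>x. (x, y)) ` A \<union> A \<times> B)
      = infsum f ((\<lambda>x. (x, y)) ` A) + infsum f (A \<times> B)"
    using insert.hyps by (intro infsum_Un_disjoint) (auto simp: nonneg_summable_on_complete)
  ultimately show ?case
    using insert by simp
qed simp

lemma nnmat_pow_lumping:
  fixes X :: "'i \<times> 'b \<Rightarrow> 'i \<times> 'b \<Rightarrow> ennreal" and C :: "'i \<Rightarrow> 'i \<Rightarrow> ennreal"
    and u :: "'b \<Rightarrow> real"
  assumes B: "finite B"
    and row: "\<And>c l j. c \<in> B \<Longrightarrow> l \<in> I \<Longrightarrow>
      (\<Sum>b\<in>B. ennreal (exp (u b - u c)) * X (l, c) (j, b)) = C l j"
    and a: "a \<in> B"
  shows "(\<Sum>b\<in>B. ennreal (exp (u b - u a)) * nnmat_pow (I \<times> B) X n (i, a) (j, b))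
       = nnmat_pow I C n i j"
proof (induction n arbitrary: j)
  case 0
  have "(\<Sum>b\<in>B. ennreal (exp (u b - u a)) * nnmat_pow (I \<times> B) X 0 (i, a) (j, b))
      = (\<Sum>b\<in>B. if b = a then (if i = j then 1 else 0) else 0)"
    by (intro sum.cong) auto
  then show ?case
    using a B by simp
next
  case (Suc n)
  define w where "w c b = ennreal (exp (u b - u c))" for c b
  define P where "P = nnmat_pow (I \<times> B) X n (i, a)"
  have w_mult: "w a b = w a c * w c b" for b c
    by (simp add: w_def ennreal_mult[symmetric] exp_add[symmetric])
  have "(\<Sum>b\<in>B. w a b * nnmat_pow (I \<times> B) X (Suc n) (i, a) (j, b))
      = (\<Sum>b\<in>B. infsum (\<lambda>p. w a b * (P p * X p (j, b))) (I \<times> B))"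
    by (simp add: P_def nnmat_mult_def infsum_cmult_right_ennreal)
  also have "\<dots> = infsum (\<lambda>p. \<Sum>b\<in>B. w a b * (P p * X p (j, b))) (I \<times> B)"
    by (simp add: B infsum_sum_ennreal)
  also have "\<dots> = infsum (\<lambda>p. P p * w a (snd p) * C (fst p) j) (I \<times> B)"
  proof (rule infsum_cong)
    fix p assume "p \<in> I \<times> B"
    then obtain l c where p: "p = (l, c)" "l \<in> I" "c \<in> B"
      by auto
    have "(\<Sum>b\<in>B. w a b * (P p * X p (j, b)))
        = P p * w a c * (\<Sum>b\<in>B. w c b * X (l, c) (j, b))"
      unfolding sum_distrib_left
      by (intro sum.cong refl) (subst w_mult[of _ c], simp add: p mult_ac)
    then show "(\<Sum>b\<in>B. w a b * (P p * X p (j, b))) = P p * w a (snd p) * C (fst p) j"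
      using row[of c l j] p by (simp add: w_def)
  qed
  also have "\<dots> = infsum (\<lambda>l. (\<Sum>c\<in>B. w a c * P (l, c)) * C l j) I"
    by (simp add: B infsum_Times_finite_ennreal infsum_sum_ennreal[symmetric]
        sum_distrib_left mult_ac)
  also have "\<dots> = nnmat_pow I C (Suc n) i j"
    using Suc.IH by (simp add: w_def P_def nnmat_mult_def)
  finally show ?case
    by (simp add: w_def)
qed

lemma nnmat_power_series_lumping:
  fixes X :: "'i \<times> 'b \<Rightarrow> 'i \<times> 'b \<Rightarrow> ennreal" and C :: "'i \<Rightarrow> 'i \<Rightarrow> ennreal"
    and u :: "'b \<Rightarrow> real"
  assumes B: "finite B"
    and row: "\<And>c l j. c \<in> B \<Longrightarrow> l \<in> I \<Longrightarrow>
      (\<Sum>b\<in>B. ennreal (exp (u b - u c)) * X (l, c) (j, b)) = C l j"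
    and a: "a \<in> B"
  shows "(\<Sum>b\<in>B. ennreal (exp (u b - u a))
           * (\<Sum>n. r ^ n * nnmat_pow (I \<times> B) X n (i, a) (j, b)))
       = (\<Sum>n. r ^ n * nnmat_pow I C n i j)"
proof -
  have "(\<Sum>b\<in>B. ennreal (exp (u b - u a))
          * (\<Sum>n. r ^ n * nnmat_pow (I \<times> B) X n (i, a) (j, b)))
      = (\<Sum>n. \<Sum>b\<in>B. ennreal (exp (u b - u a))
          * (r ^ n * nnmat_pow (I \<times> B) X n (i, a) (j, b)))"
    by (simp add: ennreal_suminf_cmult suminf_sum[OF summableI])
  also have "\<dots> = (\<Sum>n. r ^ n * nnmat_pow I C n i j)"
    by (rule suminf_cong)
      (simp add: nnmat_pow_lumping[OF B row a, symmetric] sum_distrib_left mult_ac)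
  finally show ?thesis .
qed

lemma conv_param_lumping:
  fixes X :: "'i \<times> 'b \<Rightarrow> 'i \<times> 'b \<Rightarrow> real" and A :: "'i \<Rightarrow> 'i \<Rightarrow> real"
    and u :: "'b \<Rightarrow> real"
  assumes B: "finite B" "B \<noteq> {}"
    and row: "\<And>c l j. c \<in> B \<Longrightarrow> l \<in> I \<Longrightarrow>
      (\<Sum>b\<in>B. ennreal (exp (u b - u c)) * to_nn X (l, c) (j, b)) = to_nn A l j"
  shows "conv_param (I \<times> B) X = conv_param I A"
proof -
  have "(\<forall>p\<in>I \<times> B. \<forall>q\<in>I \<times> B. (\<Sum>n. r ^ n * nnmat_pow (I \<times> B) (to_nn X) n p q) < top)
    \<longleftrightarrow> (\<forall>i\<in>I. \<forall>j\<in>I. (\<Sum>n. r ^ n * nnmat_pow I (to_nn A) n i j) < top)" for r :: ennreal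
  proof -
    have "(\<Sum>n. r ^ n * nnmat_pow I (to_nn A) n i j) < top
      \<longleftrightarrow> (\<forall>b\<in>B. (\<Sum>n. r ^ n * nnmat_pow (I \<times> B) (to_nn X) n (i, a) (j, b)) < top)"
      if "a \<in> B" for a i j
      using nnmat_power_series_lumping[where I = I, OF B(1) row that,
          where r = r and i = i and j = j, symmetric]
      by (auto simp: B(1) ennreal_mult_less_top)
    then show ?thesis
      using B(2) by fast
  qed
  then show ?thesis
    unfolding conv_param_def by simp
qed

lemma sum_mult_delta:
  fixes f :: "'a \<Rightarrow> 'b::semiring_0"
  assumes "finite B"
  shows "(\<Sum>b\<in>B. f b * (if b = t then y else 0)) = (if t \<in> B then f t * y else 0)"
  using assms by (simp add: if_distrib[of "\<lambda>z. _ * z"] sum.delta' cong: if_cong)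

lemma Cblock_weighted_row_sum:
  assumes c: "c \<in> {1..k}"
  shows "(\<Sum>b\<in>{1..k}. exp (real b * \<theta> - real c * \<theta>)
           * Cblock Cm1 C0 C1 k (real k * \<theta>) (l, c) (j, b))
       = Cstar Cm1 C0 C1 \<theta> l j"
proof -
  define e where "e b = exp ((real b - real c) * \<theta>)" for b :: nat
  have diag_blocks: "(\<Sum>b\<in>{1..k}. e b * (if b = c then C0 l j else 0)) = C0 l j"
    using c by (simp add: sum_mult_delta e_def)
  have upper_blocks: "(\<Sum>b\<in>{1..k}. e b * (if b = c + 1 then C1 l j else 0))
      = (if c < k then exp \<theta> * C1 l j else 0)"
    using c by (simp add: sum_mult_delta e_def)
  have lower_blocks: "(\<Sum>b\<in>{1..k}. e b * (if c = b + 1 then Cm1 l j else 0))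
      = (if 2 \<le> c then exp (-\<theta>) * Cm1 l j else 0)"
  proof -
    have "(\<Sum>b\<in>{1..k}. e b * (if c = b + 1 then Cm1 l j else 0))
        = (\<Sum>b\<in>{1..k}. e b * (if b = c - 1 then Cm1 l j else 0))"
      using c by (intro sum.cong) auto
    also have "\<dots> = (if c - 1 \<in> {1..k} then e (c - 1) * Cm1 l j else 0)"
      by (rule sum_mult_delta) simp
    also have "\<dots> = (if 2 \<le> c then exp (-\<theta>) * Cm1 l j else 0)"
      using c by (auto simp: e_def of_nat_diff)
    finally show ?thesis .
  qed
  have corner_Cm1: "(\<Sum>b\<in>{1..k}.
        e b * (if c = 1 \<and> b = k then exp (- (real k * \<theta>)) * Cm1 l j else 0))
      = (if c = 1 then exp (-\<theta>) * Cm1 l j else 0)"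
  proof -
    have "c = 1 \<Longrightarrow> e k * exp (- (real k * \<theta>)) = exp (-\<theta>)"
      by (simp add: e_def exp_add[symmetric] algebra_simps)
    then show ?thesis
      using c by (simp add: sum_mult_delta)
  qed
  have corner_C1: "(\<Sum>b\<in>{1..k}.
        e b * (if c = k \<and> b = 1 then exp (real k * \<theta>) * C1 l j else 0))
      = (if c = k then exp \<theta> * C1 l j else 0)"
  proof -
    have "c = k \<Longrightarrow> e 1 * exp (real k * \<theta>) = exp \<theta>"
      by (simp add: e_def exp_add[symmetric] algebra_simps)
    then show ?thesis
      using c by (simp add: sum_mult_delta)
  qed
  have e_eq: "exp (real b * \<theta> - real c * \<theta>) = e b" for b
    by (simp add: e_def left_diff_distrib)
  show ?thesis
    unfolding Cblock_def prod.case e_eq distrib_left sum.distrib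
      diag_blocks upper_blocks lower_blocks corner_Cm1 corner_C1
    using c by (auto simp: Cstar_def)
qed

lemma Cblock_nonneg:
  assumes "\<forall>i j. Cm1 i j \<ge> 0 \<and> C0 i j \<ge> 0 \<and> C1 i j \<ge> 0"
  shows "Cblock Cm1 C0 C1 k t p q \<ge> 0"
proof -
  obtain i a j b where pq: "p = (i, a)" "q = (j, b)"
    by fastforce
  have "Cm1 i j \<ge> 0" "C0 i j \<ge> 0" "C1 i j \<ge> 0"
    using assms by auto
  then show ?thesis
    unfolding pq Cblock_def prod.case by (intro add_nonneg_nonneg) simp_all
qed

lemma Cblock_weighted_row_sum_ennreal:
  assumes nonneg: "\<forall>i j. Cm1 i j \<ge> 0 \<and> C0 i j \<ge> 0 \<and> C1 i j \<ge> 0"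
    and c: "c \<in> {1..k}"
  shows "(\<Sum>b\<in>{1..k}. ennreal (exp (real b * \<theta> - real c * \<theta>))
           * to_nn (Cblock Cm1 C0 C1 k (real k * \<theta>)) (l, c) (j, b))
       = to_nn (Cstar Cm1 C0 C1 \<theta>) l j"
proof -
  have "(\<Sum>b\<in>{1..k}. ennreal (exp (real b * \<theta> - real c * \<theta>))
          * to_nn (Cblock Cm1 C0 C1 k (real k * \<theta>)) (l, c) (j, b))
      = ennreal (\<Sum>b\<in>{1..k}. exp (real b * \<theta> - real c * \<theta>)
          * Cblock Cm1 C0 C1 k (real k * \<theta>) (l, c) (j, b))"
    using Cblock_nonneg[OF nonneg] by (simp add: to_nn_def ennreal_mult[symmetric] sum_ennreal)
  then show ?thesis
    by (simp only: Cblock_weighted_row_sum[OF c] to_nn_def)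
qed

theorem propositionA1:
  fixes Cm1 C0 C1 :: "'i::countable \<Rightarrow> 'i \<Rightarrow> real"
    and k :: nat and \<theta> :: real
  assumes nonneg: "\<forall>i j. Cm1 i j \<ge> 0 \<and> C0 i j \<ge> 0 \<and> C1 i j \<ge> 0"
    and finite_pow: "\<forall>n i j. nnmat_pow UNIV (to_nn (Cstar Cm1 C0 C1 0)) n i j < top"
    and irred: "\<forall>i j. \<exists>n. nnmat_pow UNIV (to_nn (Cstar Cm1 C0 C1 0)) n i j > 0"
    and k_pos: "k \<ge> 1"
  shows "conv_param UNIV (Cstar Cm1 C0 C1 \<theta>)
       = conv_param (UNIV \<times> {1..k}) (Cblock Cm1 C0 C1 k (real k * \<theta>))"
  using conv_param_lumping[where u = "\<lambda>b. real b * \<theta>",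
      OF _ _ Cblock_weighted_row_sum_ennreal[OF nonneg]] k_pos
  by simp

end
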